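(* Let $G,H$ be connected graphs, $u_0\in V(G)$, $v_0\in V(H)$. If $\iota(G),\iota(H)<\infty$ then $\iota(G\circ_{u_0,v_0}H)=\iota(G)+\iota(H)$. If $\iota(G)=\infty$ or $\iota(H)=\infty$, then $\iota(G\circ_{u_0,v_0}H)=\infty$.
   Context: For a connected graph $G$ on vertices $v_1,\dots,v_n$, its distance matrix is $D=(d(v_i,v_j))_{i,j=1}^n$, where $d$ is the shortest-path distance; $\vec 1$ denotes the all-ones vector. $G$ is distance exceptional if $D\vec x=\vec 1$ has no solution. A curvature potential is a vector $\vec x$ with $D\vec x=\vec 1$. Curvature index $\iota(G)\in\mathbb{R}\cup\{\infty\}$: if $G$ is distance exceptional or has a curvature potential $\vec x$ with $\vec 1^\top\vec x\neq0$, then $\iota(G)$ is the unique real number with $\{D\vec x:\vec 1^\top\vec x=1\}\cap\mathbb{R}\vec 1=\{\iota(G)\vec 1\}$ (this intersection is a single point); otherwise (curvature potentials exist and all have $\vec 1^\top\vec x=0$) $\iota(G)=\infty$. The vertex coalescence $G\circ_{u_0,v_0}H$ is the graph obtained from the disjoint union of $G$ and $H$ by identifying $u_0$ with $v_0$. *)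

theory Defs
  imports Complex_Main "HOL-Library.Extended_Real"
begin

definition graph :: "'a set \<Rightarrow> ('a \<Rightarrow> 'a \<Rightarrow> bool) \<Rightarrow> bool" where
  "graph V E \<longleftrightarrow> finite V \<and> (\<forall>x y. E x y \<longrightarrow> E y x) \<and> (\<forall>x. \<not> E x x)
      \<and> (\<forall>x y. E x y \<longrightarrow> x \<in> V \<and> y \<in> V)"

definition walk :: "'a set \<Rightarrow> ('a \<Rightarrow> 'a \<Rightarrow> bool) \<Rightarrow> 'a list \<Rightarrow> bool" where
  "walk V E xs \<longleftrightarrow> xs \<noteq> [] \<and> set xs \<subseteq> V \<and>
      (\<forall>i. Suc i < length xs \<longrightarrow> E (xs ! i) (xs ! Suc i))"

definition connected_graph :: "'a set \<Rightarrow> ('a \<Rightarrow> 'a \<Rightarrow> bool) \<Rightarrow> bool" where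
  "connected_graph V E \<longleftrightarrow> graph V E \<and> V \<noteq> {} \<and>
      (\<forall>u\<in>V. \<forall>v\<in>V. \<exists>xs. walk V E xs \<and> hd xs = u \<and> last xs = v)"

definition gdist :: "'a set \<Rightarrow> ('a \<Rightarrow> 'a \<Rightarrow> bool) \<Rightarrow> 'a \<Rightarrow> 'a \<Rightarrow> nat" where
  "gdist V E u v = (LEAST n. \<exists>xs. walk V E xs \<and> hd xs = u \<and> last xs = v \<and> length xs = Suc n)"

definition distmul :: "'a set \<Rightarrow> ('a \<Rightarrow> 'a \<Rightarrow> bool) \<Rightarrow> ('a \<Rightarrow> real) \<Rightarrow> 'a \<Rightarrow> real" where
  "distmul V E x i = (\<Sum>j\<in>V. real (gdist V E i j) * x j)"

definition curvature_potential :: "'a set \<Rightarrow> ('a \<Rightarrow> 'a \<Rightarrow> bool) \<Rightarrow> ('a \<Rightarrow> real) \<Rightarrow> bool" where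
  "curvature_potential V E x \<longleftrightarrow> (\<forall>i\<in>V. distmul V E x i = 1)"

definition distance_exceptional :: "'a set \<Rightarrow> ('a \<Rightarrow> 'a \<Rightarrow> bool) \<Rightarrow> bool" where
  "distance_exceptional V E \<longleftrightarrow> \<not> (\<exists>x. curvature_potential V E x)"

text \<open>Curvature index, in ereal; the value \<infinity> is PInfty.  In the finite case it is the
  unique real c such that c\<cdot>1 = D x for some x with (sum of x over V) = 1.\<close>
definition curv_index :: "'a set \<Rightarrow> ('a \<Rightarrow> 'a \<Rightarrow> bool) \<Rightarrow> ereal" where
  "curv_index V E =
    (if distance_exceptional V E \<or> (\<exists>x. curvature_potential V E x \<and> sum x V \<noteq> 0)
     then ereal (THE c. \<exists>x. sum x V = 1 \<and> (\<forall>i\<in>V. distmul V E x i = c))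
     else PInfty)"

text \<open>Vertex coalescence: vertices Inl ` VG plus Inr ` (VH - {v0}); v0 is identified with u0.\<close>
definition coal_V :: "'a set \<Rightarrow> 'b set \<Rightarrow> 'b \<Rightarrow> ('a + 'b) set" where
  "coal_V VG VH v0 = Inl ` VG \<union> Inr ` (VH - {v0})"

definition coal_E :: "('a \<Rightarrow> 'a \<Rightarrow> bool) \<Rightarrow> ('b \<Rightarrow> 'b \<Rightarrow> bool) \<Rightarrow> 'a \<Rightarrow> 'b
    \<Rightarrow> ('a + 'b) \<Rightarrow> ('a + 'b) \<Rightarrow> bool" where
  "coal_E EG EH u0 v0 p q =
    (case (p, q) of
       (Inl x, Inl y) \<Rightarrow> EG x y
     | (Inr x, Inr y) \<Rightarrow> x \<noteq> v0 \<and> y \<noteq> v0 \<and> EH x y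
     | (Inl x, Inr y) \<Rightarrow> x = u0 \<and> y \<noteq> v0 \<and> EH v0 y
     | (Inr x, Inl y) \<Rightarrow> y = u0 \<and> x \<noteq> v0 \<and> EH x v0)"

end

(*
  The curvature index only depends on the affine levels of the distance matrix D: the reals c
  such that D x = c 1 for some x with total mass 1.  Because D is symmetric, there is at most
  one such level, and one exists exactly when G is distance exceptional (Fredholm alternative)
  or has a curvature potential of nonzero mass; otherwise the index is infinite.

  In the coalescence, distances split as d(p, q) = d_G(pi_G p, pi_G q) + d_H(pi_H p, pi_H q),
  where pi_G collapses H onto u0 and pi_H collapses G onto v0.  Hence D z is the sum of D_G and
  D_H applied to the push-forwards of z, which keep the total mass.  Normalised vectors at levels
  a for G and b for H glue to one at level a + b for the coalescence; conversely, a normalised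
  vector at some level for the coalescence pushes forward to normalised vectors at some level for
  G and for H.
*)
theory Submission
  imports Defs
begin

inductive reachable_in :: "('a \<Rightarrow> 'a \<Rightarrow> bool) \<Rightarrow> nat \<Rightarrow> 'a \<Rightarrow> 'a \<Rightarrow> bool" for E where
  reachable_in_0: "reachable_in E 0 u u"
| reachable_in_Suc: "E u w \<Longrightarrow> reachable_in E n w v \<Longrightarrow> reachable_in E (Suc n) u v"

lemma reachable_in_trans:
  "reachable_in E m u w \<Longrightarrow> reachable_in E k w v \<Longrightarrow> reachable_in E (m + k) u v"
  by (induction rule: reachable_in.induct) (auto intro: reachable_in.intros)

lemma reachable_in_sym:
  assumes "\<And>x y. E x y \<Longrightarrow> E y x"
  shows "reachable_in E n u v \<Longrightarrow> reachable_in E n v u"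
proof (induction rule: reachable_in.induct)
  case (reachable_in_0 u)
  then show ?case by (rule reachable_in.reachable_in_0)
next
  case (reachable_in_Suc u w n v)
  have "reachable_in E 1 w u"
    using assms reachable_in_Suc.hyps(1) by (auto intro: reachable_in.intros)
  from reachable_in_trans[OF reachable_in_Suc.IH this] show ?case by simp
qed

lemma reachable_in_imp_walk:
  "reachable_in E n u v \<Longrightarrow> graph V E \<Longrightarrow> u \<in> V \<Longrightarrow>
    \<exists>xs. walk V E xs \<and> hd xs = u \<and> last xs = v \<and> length xs = Suc n"
proof (induction rule: reachable_in.induct)
  case (reachable_in_0 u)
  then show ?case by (intro exI[of _ "[u]"]) (auto simp: walk_def)
next
  case (reachable_in_Suc u w n v)
  have "w \<in> V" using reachable_in_Suc by (metis graph_def)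
  then obtain xs where xs: "walk V E xs" "hd xs = w" "last xs = v" "length xs = Suc n"
    using reachable_in_Suc by blast
  have "walk V E (u # xs)"
    unfolding walk_def
  proof (intro conjI allI impI)
    show "set (u # xs) \<subseteq> V" using xs(1) reachable_in_Suc.prems by (auto simp: walk_def)
    fix i assume "Suc i < length (u # xs)"
    then show "E ((u # xs) ! i) ((u # xs) ! Suc i)"
      using xs reachable_in_Suc.hyps(1) by (cases i) (auto simp: walk_def hd_conv_nth)
  qed simp
  with xs show ?case by (intro exI[of _ "u # xs"]) auto
qed

lemma walk_imp_reachable_in:
  "walk V E xs \<Longrightarrow> length xs = Suc n \<Longrightarrow> reachable_in E n (hd xs) (last xs)"
proof (induction n arbitrary: xs)
  case 0
  then obtain u where "xs = [u]" by (cases xs) auto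
  then show ?case by (auto intro: reachable_in.intros)
next
  case (Suc n)
  then obtain u ys where xs: "xs = u # ys" by (cases xs) auto
  with Suc.prems have ys: "ys \<noteq> []" "length ys = Suc n" by auto
  have "walk V E ys" using Suc.prems xs ys by (auto simp: walk_def)
  with Suc.IH ys have "reachable_in E n (hd ys) (last ys)" by blast
  moreover have "E u (hd ys)"
    using Suc.prems(1) xs ys unfolding walk_def by (metis hd_conv_nth length_Cons
        nth_Cons_0 nth_Cons_Suc Suc_less_eq length_greater_0_conv)
  ultimately show ?case using xs ys by (auto intro: reachable_in.intros)
qed

lemma gdist_eq_Least_reachable_in:
  assumes "graph V E" "u \<in> V"
  shows "gdist V E u v = (LEAST n. reachable_in E n u v)"
proof -
  have "(\<exists>xs. walk V E xs \<and> hd xs = u \<and> last xs = v \<and> length xs = Suc n) \<longleftrightarrow> reachable_in E n u v"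
    for n
    using reachable_in_imp_walk[OF _ assms] walk_imp_reachable_in by metis
  then show ?thesis by (simp add: gdist_def)
qed

lemma gdist_le_reachable_in:
  "graph V E \<Longrightarrow> u \<in> V \<Longrightarrow> reachable_in E n u v \<Longrightarrow> gdist V E u v \<le> n"
  by (simp add: gdist_eq_Least_reachable_in Least_le)

lemma reachable_in_gdist:
  assumes "connected_graph V E" "u \<in> V" "v \<in> V"
  shows "reachable_in E (gdist V E u v) u v"
proof -
  obtain xs where xs: "walk V E xs" "hd xs = u" "last xs = v"
    using assms unfolding connected_graph_def by blast
  then obtain n where "length xs = Suc n" by (cases xs) (auto simp: walk_def)
  with xs have "\<exists>n. reachable_in E n u v" using walk_imp_reachable_in by blast
  moreover have "gdist V E u v = (LEAST n. reachable_in E n u v)"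
    using assms by (simp add: gdist_eq_Least_reachable_in connected_graph_def)
  ultimately show ?thesis by (metis LeastI_ex)
qed

lemma gdist_self: "graph V E \<Longrightarrow> u \<in> V \<Longrightarrow> gdist V E u u = 0"
  using gdist_le_reachable_in[OF _ _ reachable_in_0] by fastforce

lemma gdist_commute:
  assumes "connected_graph V E" "u \<in> V" "v \<in> V"
  shows "gdist V E u v = gdist V E v u"
proof -
  have g: "graph V E" and sym: "\<And>x y. E x y \<Longrightarrow> E y x"
    using assms(1) by (auto simp: connected_graph_def graph_def)
  have "gdist V E x y \<le> gdist V E y x" if "x \<in> V" "y \<in> V" for x y
    using gdist_le_reachable_in[OF g that(1) reachable_in_sym[OF sym reachable_in_gdist]]
      assms(1) that by blast
  with assms(2,3) show ?thesis by (meson antisym)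
qed

lemma gdist_le_Suc_gdist_neighbour:
  assumes "connected_graph V E" "x = w \<or> E x w" "w \<in> V" "y \<in> V"
  shows "gdist V E x y \<le> Suc (gdist V E w y)"
proof (cases "x = w")
  case False
  then have e: "E x w" using assms(2) by simp
  have g: "graph V E" using assms(1) by (simp add: connected_graph_def)
  with e have "x \<in> V" by (metis graph_def)
  then show ?thesis
    using gdist_le_reachable_in[OF g _ reachable_in_Suc[OF e reachable_in_gdist[OF assms(1,3,4)]]]
    by blast
qed simp

text \<open>Pivoting on the entry A p c: subtracting A i c / A p c times row p from every row
  i \<noteq> p clears column c, leaving a system in the columns W and the rows V - {p}.\<close>
lemma pivot_elimination_solution:
  fixes A :: "'a \<Rightarrow> 'b \<Rightarrow> real"
  assumes "finite W" "c \<notin> W" "A p c \<noteq> 0"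
    and reduced: "\<forall>i\<in>V-{p}. (\<Sum>j\<in>W. (A i j - A i c / A p c * A p j) * x j)
                                = b i - A i c / A p c * b p"
  shows "\<exists>x'. \<forall>i\<in>V. (\<Sum>j\<in>insert c W. A i j * x' j) = b i"
proof -
  define S where "S = (\<Sum>j\<in>W. A p j * x j)"
  define x' where "x' = x(c := (b p - S) / A p c)"
  have "(\<Sum>j\<in>insert c W. A i j * x' j) = b i" if "i \<in> V" for i
  proof -
    have "(\<Sum>j\<in>W. A i j * x' j) = (\<Sum>j\<in>W. A i j * x j)"
      unfolding x'_def using assms(2) by (intro sum.cong) auto
    then have "(\<Sum>j\<in>insert c W. A i j * x' j) = A i c * ((b p - S) / A p c) + (\<Sum>j\<in>W. A i j * x j)"
      using assms(1,2) by (simp add: x'_def)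
    also have "\<dots> = b i"
    proof (cases "i = p")
      case True
      then show ?thesis using assms(3) by (simp add: S_def)
    next
      case False
      have "(\<Sum>j\<in>W. A i j * x j)
          = (\<Sum>j\<in>W. (A i j - A i c / A p c * A p j) * x j) + A i c / A p c * S"
        by (simp add: S_def sum_distrib_left algebra_simps sum.distrib[symmetric])
      also have "\<dots> = b i - A i c / A p c * b p + A i c / A p c * S"
        using reduced that False by auto
      finally show ?thesis using assms(3) by (simp add: field_simps)
    qed
    finally show ?thesis .
  qed
  then show ?thesis by blast
qed

lemma pivot_elimination_annihilator:
  fixes A :: "'a \<Rightarrow> 'b \<Rightarrow> real"
  assumes "finite V" "p \<in> V" "A p c \<noteq> 0"
    and orth: "\<forall>y. (\<forall>j\<in>insert c W. (\<Sum>i\<in>V. y i * A i j) = 0) \<longrightarrow> (\<Sum>i\<in>V. y i * b i) = 0"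
    and "\<forall>j\<in>W. (\<Sum>i\<in>V-{p}. y i * (A i j - A i c / A p c * A p j)) = 0"
  shows "(\<Sum>i\<in>V-{p}. y i * (b i - A i c / A p c * b p)) = 0"
proof -
  define k where "k i = A i c / A p c" for i
  \<comment> \<open>the weight at p is chosen to cancel column c\<close>
  define y' where "y' = y(p := - (\<Sum>i\<in>V-{p}. y i * k i))"
  have lift: "(\<Sum>i\<in>V. y' i * f i) = (\<Sum>i\<in>V-{p}. y i * (f i - k i * f p))" for f
  proof -
    have "(\<Sum>i\<in>V. y' i * f i) = y' p * f p + (\<Sum>i\<in>V-{p}. y' i * f i)"
      by (rule sum.remove[OF assms(1,2)])
    also have "(\<Sum>i\<in>V-{p}. y' i * f i) = (\<Sum>i\<in>V-{p}. y i * f i)"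
      by (rule sum.cong) (auto simp: y'_def)
    also have "y' p * f p = - (\<Sum>i\<in>V-{p}. y i * k i * f p)"
      by (simp add: y'_def sum_distrib_right)
    also have "- (\<Sum>i\<in>V-{p}. y i * k i * f p) + (\<Sum>i\<in>V-{p}. y i * f i)
             = (\<Sum>i\<in>V-{p}. y i * f i - y i * k i * f p)"
      by (simp add: sum_subtractf)
    finally show ?thesis by (simp add: algebra_simps)
  qed
  have "(\<Sum>i\<in>V. y' i * A i j) = 0" if "j \<in> insert c W" for j
  proof (cases "j = c")
    case True
    then show ?thesis using assms(3) by (simp add: lift k_def)
  next
    case False
    with that assms(5) show ?thesis by (simp add: lift k_def)
  qed
  with orth have "(\<Sum>i\<in>V. y' i * b i) = 0" by blast
  then show ?thesis by (simp add: lift k_def)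
qed

text \<open>The nontrivial half of the Fredholm alternative, by Gaussian elimination over the
  columns W.\<close>
lemma solvable_if_orthogonal_left_kernel:
  fixes A :: "'a \<Rightarrow> 'b \<Rightarrow> real"
  assumes "finite W" "finite V"
    and "\<forall>y. (\<forall>j\<in>W. (\<Sum>i\<in>V. y i * A i j) = 0) \<longrightarrow> (\<Sum>i\<in>V. y i * b i) = 0"
  shows "\<exists>x. \<forall>i\<in>V. (\<Sum>j\<in>W. A i j * x j) = b i"
  using assms
proof (induction W arbitrary: V A b rule: finite_induct)
  case empty
  then have "(\<Sum>i\<in>V. b i * b i) = 0" by auto
  with empty.prems(1) have "\<forall>i\<in>V. b i = 0" by (simp add: sum_nonneg_eq_0_iff)
  then show ?case by auto
next
  case (insert c W)
  show ?case
  proof (cases "\<forall>i\<in>V. A i c = 0")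
    case True
    with insert.prems have "\<exists>x. \<forall>i\<in>V. (\<Sum>j\<in>W. A i j * x j) = b i"
      by (intro insert.IH) auto
    with True insert.hyps show ?thesis by simp
  next
    case False
    then obtain p where p: "p \<in> V" "A p c \<noteq> 0" by auto
    have "\<exists>x. \<forall>i\<in>V-{p}. (\<Sum>j\<in>W. (A i j - A i c / A p c * A p j) * x j)
                        = b i - A i c / A p c * b p"
    proof (rule insert.IH)
      show "finite (V - {p})" using insert.prems(1) by simp
      show "\<forall>y. (\<forall>j\<in>W. (\<Sum>i\<in>V-{p}. y i * (A i j - A i c / A p c * A p j)) = 0) \<longrightarrow>
                (\<Sum>i\<in>V-{p}. y i * (b i - A i c / A p c * b p)) = 0"
        using pivot_elimination_annihilator[OF insert.prems(1) p insert.prems(2)] by blast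
    qed
    then obtain x where "\<forall>i\<in>V-{p}. (\<Sum>j\<in>W. (A i j - A i c / A p c * A p j) * x j)
                        = b i - A i c / A p c * b p" ..
    with insert.hyps p(2) show ?thesis
      by (intro pivot_elimination_solution[where A = A and p = p and x = x]) auto
  qed
qed

lemma symmetric_sum_mult_swap:
  fixes M :: "'a \<Rightarrow> 'a \<Rightarrow> 'b::comm_semiring_0"
  assumes "\<And>i j. i \<in> V \<Longrightarrow> j \<in> V \<Longrightarrow> M i j = M j i"
  shows "(\<Sum>i\<in>V. x i * (\<Sum>j\<in>V. M i j * y j)) = (\<Sum>i\<in>V. y i * (\<Sum>j\<in>V. M i j * x j))"
proof -
  have "(\<Sum>i\<in>V. x i * (\<Sum>j\<in>V. M i j * y j)) = (\<Sum>i\<in>V. \<Sum>j\<in>V. x i * M i j * y j)"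
    by (simp add: sum_distrib_left mult.assoc)
  also have "\<dots> = (\<Sum>j\<in>V. \<Sum>i\<in>V. x i * M i j * y j)"
    by (rule sum.swap)
  also have "\<dots> = (\<Sum>j\<in>V. y j * (\<Sum>i\<in>V. M j i * x i))"
    using assms by (auto simp: sum_distrib_left mult_ac intro!: sum.cong)
  finally show ?thesis .
qed

definition affine_level :: "'a set \<Rightarrow> ('a \<Rightarrow> 'a \<Rightarrow> real) \<Rightarrow> real \<Rightarrow> bool" where
  "affine_level V M c \<longleftrightarrow> (\<exists>x. sum x V = 1 \<and> (\<forall>i\<in>V. (\<Sum>j\<in>V. M i j * x j) = c))"

lemma sum_mult_level:
  fixes M :: "'a \<Rightarrow> 'a \<Rightarrow> 'b::comm_semiring_0"
  assumes "\<forall>i\<in>V. (\<Sum>j\<in>V. M i j * x j) = c"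
  shows "(\<Sum>i\<in>V. y i * (\<Sum>j\<in>V. M i j * x j)) = c * sum y V"
  using assms by (simp add: sum_distrib_left mult.commute)

lemma affine_level_unique:
  assumes "\<And>i j. i \<in> V \<Longrightarrow> j \<in> V \<Longrightarrow> M i j = M j i"
    and "affine_level V M c" "affine_level V M d"
  shows "c = d"
proof -
  obtain x y where x: "sum x V = 1" "\<forall>i\<in>V. (\<Sum>j\<in>V. M i j * x j) = c"
    and y: "sum y V = 1" "\<forall>i\<in>V. (\<Sum>j\<in>V. M i j * y j) = d"
    using assms(2,3) unfolding affine_level_def by blast
  have "(\<Sum>i\<in>V. x i * (\<Sum>j\<in>V. M i j * y j)) = d"
    using sum_mult_level[OF y(2)] x(1) by simp
  moreover have "(\<Sum>i\<in>V. y i * (\<Sum>j\<in>V. M i j * x j)) = c"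
    using sum_mult_level[OF x(2)] y(1) by simp
  ultimately show ?thesis
    using symmetric_sum_mult_swap[OF assms(1), where x = x and y = y] by simp
qed

lemma affine_level_iff:
  assumes "finite V" and sym: "\<And>i j. i \<in> V \<Longrightarrow> j \<in> V \<Longrightarrow> M i j = M j i"
  shows "(\<exists>c. affine_level V M c) \<longleftrightarrow>
    \<not> (\<exists>w. \<forall>i\<in>V. (\<Sum>j\<in>V. M i j * w j) = 1) \<or>
    (\<exists>w. (\<forall>i\<in>V. (\<Sum>j\<in>V. M i j * w j) = 1) \<and> sum w V \<noteq> 0)"
proof
  assume "\<exists>c. affine_level V M c"
  then obtain c x where x: "sum x V = 1" "\<forall>i\<in>V. (\<Sum>j\<in>V. M i j * x j) = c"
    unfolding affine_level_def by blast
  have "c * sum w V = 1" if w: "\<forall>i\<in>V. (\<Sum>j\<in>V. M i j * w j) = 1" for w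
  proof -
    have "(\<Sum>i\<in>V. w i * (\<Sum>j\<in>V. M i j * x j)) = c * sum w V"
      using sum_mult_level[OF x(2)] .
    moreover have "(\<Sum>i\<in>V. x i * (\<Sum>j\<in>V. M i j * w j)) = 1"
      using sum_mult_level[OF w] x(1) by simp
    ultimately show ?thesis
      using symmetric_sum_mult_swap[OF sym, where x = x and y = w] by simp
  qed
  then show "\<not> (\<exists>w. \<forall>i\<in>V. (\<Sum>j\<in>V. M i j * w j) = 1) \<or>
    (\<exists>w. (\<forall>i\<in>V. (\<Sum>j\<in>V. M i j * w j) = 1) \<and> sum w V \<noteq> 0)"
    by force
next
  have normalize: "affine_level V M (c / sum w V)"
    if "\<forall>i\<in>V. (\<Sum>j\<in>V. M i j * w j) = c" "sum w V \<noteq> 0" for w c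
    unfolding affine_level_def using that
    by (intro exI[of _ "\<lambda>i. w i / sum w V"])
       (simp add: sum_divide_distrib[symmetric])
  assume "\<not> (\<exists>w. \<forall>i\<in>V. (\<Sum>j\<in>V. M i j * w j) = 1) \<or>
    (\<exists>w. (\<forall>i\<in>V. (\<Sum>j\<in>V. M i j * w j) = 1) \<and> sum w V \<noteq> 0)"
  then show "\<exists>c. affine_level V M c"
  proof
    assume "\<not> (\<exists>w. \<forall>i\<in>V. (\<Sum>j\<in>V. M i j * w j) = 1)"
    then obtain y where y: "\<forall>j\<in>V. (\<Sum>i\<in>V. y i * M i j) = 0" "(\<Sum>i\<in>V. y i * 1) \<noteq> 0"
      using solvable_if_orthogonal_left_kernel[OF assms(1,1), of M "\<lambda>_. 1"] by blast
    have "(\<Sum>j\<in>V. M i j * y j) = 0" if "i \<in> V" for i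
    proof -
      have "(\<Sum>j\<in>V. M i j * y j) = (\<Sum>j\<in>V. y j * M j i)"
        using sym that by (intro sum.cong) (auto simp: mult.commute)
      with y(1) that show ?thesis by simp
    qed
    with y(2) have "affine_level V M (0 / sum y V)" by (intro normalize) auto
    then show ?thesis ..
  next
    assume "\<exists>w. (\<forall>i\<in>V. (\<Sum>j\<in>V. M i j * w j) = 1) \<and> sum w V \<noteq> 0"
    with normalize show ?thesis by blast
  qed
qed

abbreviation distance_matrix :: "'a set \<Rightarrow> ('a \<Rightarrow> 'a \<Rightarrow> bool) \<Rightarrow> 'a \<Rightarrow> 'a \<Rightarrow> real" where
  "distance_matrix V E i j \<equiv> real (gdist V E i j)"

lemma distance_matrix_commute:
  "connected_graph V E \<Longrightarrow> i \<in> V \<Longrightarrow> j \<in> V \<Longrightarrow> distance_matrix V E i j = distance_matrix V E j i"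
  using gdist_commute by metis

lemma curv_index_finite_case_iff:
  assumes "connected_graph V E"
  shows "(distance_exceptional V E \<or> (\<exists>x. curvature_potential V E x \<and> sum x V \<noteq> 0)) \<longleftrightarrow>
    (\<exists>c. affine_level V (distance_matrix V E) c)"
proof -
  have "finite V" using assms by (simp add: connected_graph_def graph_def)
  from affine_level_iff[OF this distance_matrix_commute[OF assms]] show ?thesis
    by (simp add: distance_exceptional_def curvature_potential_def distmul_def)
qed

lemma affine_level_distance_matrix_iff:
  "affine_level V (distance_matrix V E) c \<longleftrightarrow> (\<exists>x. sum x V = 1 \<and> (\<forall>i\<in>V. distmul V E x i = c))"
  by (simp add: affine_level_def distmul_def)

lemma curv_index_conv_affine_level:
  assumes "connected_graph V E"
  shows "curv_index V E = (if \<exists>c. affine_level V (distance_matrix V E) c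
    then ereal (THE c. affine_level V (distance_matrix V E) c) else \<infinity>)"
  unfolding curv_index_def curv_index_finite_case_iff[OF assms]
    affine_level_distance_matrix_iff by simp

lemma curv_index_eq_ereal:
  assumes "connected_graph V E" "affine_level V (distance_matrix V E) c"
  shows "curv_index V E = ereal c"
proof -
  have "(THE c. affine_level V (distance_matrix V E) c) = c"
  proof (rule the_equality)
    show "affine_level V (distance_matrix V E) c" by (fact assms(2))
    show "d = c" if "affine_level V (distance_matrix V E) d" for d
      using affine_level_unique[OF distance_matrix_commute[OF assms(1)] that assms(2)] .
  qed
  with assms show ?thesis by (auto simp: curv_index_conv_affine_level)
qed

lemma curv_index_eq_infinity:
  assumes "connected_graph V E" "\<nexists>c. affine_level V (distance_matrix V E) c"
  shows "curv_index V E = \<infinity>"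
  using assms by (simp add: curv_index_conv_affine_level)

locale coalescence =
  fixes VG :: "'a set" and EG :: "'a \<Rightarrow> 'a \<Rightarrow> bool"
    and VH :: "'b set" and EH :: "'b \<Rightarrow> 'b \<Rightarrow> bool"
    and u0 :: 'a and v0 :: 'b
  assumes connected_G: "connected_graph VG EG" and connected_H: "connected_graph VH EH"
    and u0_in: "u0 \<in> VG" and v0_in: "v0 \<in> VH"
begin

abbreviation "VC \<equiv> coal_V VG VH v0"
abbreviation "EC \<equiv> coal_E EG EH u0 v0"
abbreviation "dG \<equiv> gdist VG EG"
abbreviation "dH \<equiv> gdist VH EH"

definition proj_G :: "'a + 'b \<Rightarrow> 'a" where
  "proj_G p = (case p of Inl a \<Rightarrow> a | Inr _ \<Rightarrow> u0)"

definition proj_H :: "'a + 'b \<Rightarrow> 'b" where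
  "proj_H p = (case p of Inl _ \<Rightarrow> v0 | Inr b \<Rightarrow> b)"

definition incl_H :: "'b \<Rightarrow> 'a + 'b" where
  "incl_H b = (if b = v0 then Inl u0 else Inr b)"

lemma graph_G: "graph VG EG" and graph_H: "graph VH EH"
  using connected_G connected_H by (auto simp: connected_graph_def)

lemma finite_VG: "finite VG" and finite_VH: "finite VH"
  using graph_G graph_H by (auto simp: graph_def)

lemma proj_G_in: "p \<in> VC \<Longrightarrow> proj_G p \<in> VG"
  using u0_in by (auto simp: coal_V_def proj_G_def)

lemma proj_H_in: "p \<in> VC \<Longrightarrow> proj_H p \<in> VH"
  using v0_in by (auto simp: coal_V_def proj_H_def)

lemma graph_coalescence: "graph VC EC"
  unfolding graph_def
proof (intro conjI allI impI)
  show "finite VC" using finite_VG finite_VH by (simp add: coal_V_def)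
  fix x y
  show "EC x y \<Longrightarrow> EC y x"
    using graph_G graph_H by (cases x; cases y) (auto simp: coal_E_def graph_def)
  show "\<not> EC x x"
    using graph_G graph_H by (cases x) (auto simp: coal_E_def graph_def)
  assume "EC x y"
  then show "x \<in> VC" and "y \<in> VC"
    using graph_G graph_H u0_in
    by (cases x; cases y; auto simp: coal_E_def graph_def coal_V_def)+
qed

lemma reachable_in_Inl: "reachable_in EG n a b \<Longrightarrow> reachable_in EC n (Inl a) (Inl b)"
proof (induction rule: reachable_in.induct)
  case (reachable_in_0 u)
  then show ?case by (rule reachable_in.reachable_in_0)
next
  case (reachable_in_Suc u w n v)
  then have "EC (Inl u) (Inl w)" by (simp add: coal_E_def)
  then show ?case using reachable_in_Suc.IH by (rule reachable_in.reachable_in_Suc)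
qed

lemma reachable_in_incl_H: "reachable_in EH n a b \<Longrightarrow> reachable_in EC n (incl_H a) (incl_H b)"
proof (induction rule: reachable_in.induct)
  case (reachable_in_0 u)
  then show ?case by (rule reachable_in.reachable_in_0)
next
  case (reachable_in_Suc u w n v)
  then have "u \<noteq> w" using graph_H by (auto simp: graph_def)
  with reachable_in_Suc.hyps(1) have "EC (incl_H u) (incl_H w)"
    by (auto simp: incl_H_def coal_E_def)
  then show ?case using reachable_in_Suc.IH by (rule reachable_in.reachable_in_Suc)
qed

lemma reachable_in_proj_gdist:
  assumes "p \<in> VC" "q \<in> VC"
  shows "reachable_in EC (dG (proj_G p) (proj_G q) + dH (proj_H p) (proj_H q)) p q"
proof -
  have G: "reachable_in EC (dG a a') (Inl a) (Inl a')" if "a \<in> VG" "a' \<in> VG" for a a'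
    using reachable_in_Inl[OF reachable_in_gdist[OF connected_G that]] .
  have H: "reachable_in EC (dH b b') (incl_H b) (incl_H b')" if "b \<in> VH" "b' \<in> VH" for b b'
    using reachable_in_incl_H[OF reachable_in_gdist[OF connected_H that]] .
  have H_from: "reachable_in EC (dH b v0) (incl_H b) (Inl u0)" if "b \<in> VH" for b
    using H[OF that v0_in] by (simp add: incl_H_def)
  have H_to: "reachable_in EC (dH v0 b) (Inl u0) (incl_H b)" if "b \<in> VH" for b
    using H[OF v0_in that] by (simp add: incl_H_def)
  note simps = proj_G_def proj_H_def incl_H_def coal_V_def
    gdist_self[OF graph_G u0_in] gdist_self[OF graph_H v0_in]
  show ?thesis
  proof (cases p; cases q)
    fix a a' assume "p = Inl a" "q = Inl a'"
    with assms G show ?thesis by (auto simp: simps)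
  next
    fix a b' assume pq: "p = Inl a" "q = Inr b'"
    with assms have "a \<in> VG" "b' \<in> VH" "q = incl_H b'" by (auto simp: simps)
    with pq have "reachable_in EC (dG a u0 + dH v0 b') p q"
      using reachable_in_trans[OF G[OF _ u0_in] H_to] by metis
    with pq show ?thesis by (simp add: simps)
  next
    fix b a' assume pq: "p = Inr b" "q = Inl a'"
    with assms have "b \<in> VH" "a' \<in> VG" "p = incl_H b" by (auto simp: simps)
    with pq have "reachable_in EC (dH b v0 + dG u0 a') p q"
      using reachable_in_trans[OF H_from G[OF u0_in]] by metis
    with pq show ?thesis by (simp add: simps add.commute)
  next
    fix b b' assume pq: "p = Inr b" "q = Inr b'"
    with assms have "b \<in> VH" "b' \<in> VH" "p = incl_H b" "q = incl_H b'" by (auto simp: simps)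
    then have "reachable_in EC (dH b b') p q" using H by metis
    with pq show ?thesis by (simp add: simps)
  qed
qed

lemma edge_proj_cases:
  "EC p w \<Longrightarrow>
    ((proj_G p = proj_G w \<or> EG (proj_G p) (proj_G w)) \<and> proj_H p = proj_H w) \<or>
    (proj_G p = proj_G w \<and> (proj_H p = proj_H w \<or> EH (proj_H p) (proj_H w)))"
  by (cases p; cases w) (auto simp: coal_E_def proj_G_def proj_H_def)

lemma proj_gdist_le_reachable_in:
  "reachable_in EC n p q \<Longrightarrow> p \<in> VC \<Longrightarrow> q \<in> VC \<Longrightarrow>
    dG (proj_G p) (proj_G q) + dH (proj_H p) (proj_H q) \<le> n"
proof (induction rule: reachable_in.induct)
  case (reachable_in_0 u)
  then show ?case
    using gdist_self[OF graph_G proj_G_in] gdist_self[OF graph_H proj_H_in] by simp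
next
  case (reachable_in_Suc u w n v)
  have w: "w \<in> VC" using reachable_in_Suc.hyps(1) graph_coalescence by (auto simp: graph_def)
  with reachable_in_Suc have IH: "dG (proj_G w) (proj_G v) + dH (proj_H w) (proj_H v) \<le> n"
    by blast
  note step_G = gdist_le_Suc_gdist_neighbour[OF connected_G _ proj_G_in[OF w]
      proj_G_in[OF reachable_in_Suc.prems(2)]]
  note step_H = gdist_le_Suc_gdist_neighbour[OF connected_H _ proj_H_in[OF w]
      proj_H_in[OF reachable_in_Suc.prems(2)]]
  from edge_proj_cases[OF reachable_in_Suc.hyps(1)] IH step_G step_H show ?case
    by fastforce
qed

lemma connected_coalescence: "connected_graph VC EC"
  unfolding connected_graph_def
proof (intro conjI ballI)
  show "graph VC EC" by (rule graph_coalescence)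
  show "VC \<noteq> {}" using u0_in by (auto simp: coal_V_def)
  fix p q assume "p \<in> VC" "q \<in> VC"
  then show "\<exists>xs. walk VC EC xs \<and> hd xs = p \<and> last xs = q"
    using reachable_in_imp_walk[OF reachable_in_proj_gdist graph_coalescence] by blast
qed

lemma gdist_coalescence:
  assumes "p \<in> VC" "q \<in> VC"
  shows "gdist VC EC p q = dG (proj_G p) (proj_G q) + dH (proj_H p) (proj_H q)"
proof (rule antisym)
  show "gdist VC EC p q \<le> dG (proj_G p) (proj_G q) + dH (proj_H p) (proj_H q)"
    using gdist_le_reachable_in[OF graph_coalescence assms(1) reachable_in_proj_gdist[OF assms]] .
  from assms reachable_in_gdist[OF connected_coalescence assms] show "dG (proj_G p) (proj_G q) + dH (proj_H p) (proj_H q) \<le> gdist VC EC p q"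
    using proj_gdist_le_reachable_in by blast
qed

definition push_G :: "('a + 'b \<Rightarrow> real) \<Rightarrow> 'a \<Rightarrow> real" where
  "push_G z a = z (Inl a) + (if a = u0 then (\<Sum>b\<in>VH-{v0}. z (Inr b)) else 0)"

definition push_H :: "('a + 'b \<Rightarrow> real) \<Rightarrow> 'b \<Rightarrow> real" where
  "push_H z b = (if b = v0 then (\<Sum>a\<in>VG. z (Inl a)) else z (Inr b))"

lemma sum_VC: "(\<Sum>p\<in>VC. f p) = (\<Sum>a\<in>VG. f (Inl a)) + (\<Sum>b\<in>VH-{v0}. f (Inr b))"
proof -
  have "(\<Sum>p\<in>VC. f p) = (\<Sum>p\<in>Inl ` VG. f p) + (\<Sum>p\<in>Inr ` (VH-{v0}). f p)"
    unfolding coal_V_def using finite_VG finite_VH by (intro sum.union_disjoint) auto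
  then show ?thesis by (simp add: sum.reindex)
qed

lemma sum_proj_G_mult: "(\<Sum>q\<in>VC. f (proj_G q) * z q) = (\<Sum>a\<in>VG. f a * push_G z a)"
proof -
  have "(\<Sum>a\<in>VG. f a * push_G z a)
      = (\<Sum>a\<in>VG. f a * z (Inl a) + (if a = u0 then f a * (\<Sum>b\<in>VH-{v0}. z (Inr b)) else 0))"
    by (intro sum.cong) (auto simp: push_G_def distrib_left)
  also have "\<dots> = (\<Sum>a\<in>VG. f a * z (Inl a))
      + (\<Sum>a\<in>VG. if a = u0 then f a * (\<Sum>b\<in>VH-{v0}. z (Inr b)) else 0)"
    by (rule sum.distrib)
  also have "(\<Sum>a\<in>VG. if a = u0 then f a * (\<Sum>b\<in>VH-{v0}. z (Inr b)) else 0)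
      = f u0 * (\<Sum>b\<in>VH-{v0}. z (Inr b))"
    using finite_VG u0_in by (simp add: sum.delta')
  finally show ?thesis by (simp add: sum_VC proj_G_def sum_distrib_left)
qed

lemma sum_proj_H_mult: "(\<Sum>q\<in>VC. f (proj_H q) * z q) = (\<Sum>b\<in>VH. f b * push_H z b)"
proof -
  have "(\<Sum>b\<in>VH. f b * push_H z b) = f v0 * push_H z v0 + (\<Sum>b\<in>VH-{v0}. f b * push_H z b)"
    using sum.remove[OF finite_VH v0_in] .
  also have "(\<Sum>b\<in>VH-{v0}. f b * push_H z b) = (\<Sum>b\<in>VH-{v0}. f b * z (Inr b))"
    by (intro sum.cong) (auto simp: push_H_def)
  finally show ?thesis by (simp add: sum_VC proj_H_def push_H_def sum_distrib_left)
qed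

lemma sum_push_G: "sum (push_G z) VG = sum z VC"
  using sum_proj_G_mult[of "\<lambda>_. 1" z] by simp

lemma sum_push_H: "sum (push_H z) VH = sum z VC"
  using sum_proj_H_mult[of "\<lambda>_. 1" z] by simp

lemma distmul_coalescence:
  assumes "p \<in> VC"
  shows "distmul VC EC z p = distmul VG EG (push_G z) (proj_G p) + distmul VH EH (push_H z) (proj_H p)"
proof -
  have "distmul VC EC z p
      = (\<Sum>q\<in>VC. real (dG (proj_G p) (proj_G q)) * z q + real (dH (proj_H p) (proj_H q)) * z q)"
    unfolding distmul_def using gdist_coalescence[OF assms]
    by (intro sum.cong) (auto simp: distrib_right)
  also have "\<dots> = (\<Sum>q\<in>VC. real (dG (proj_G p) (proj_G q)) * z q)
      + (\<Sum>q\<in>VC. real (dH (proj_H p) (proj_H q)) * z q)"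
    by (rule sum.distrib)
  finally show ?thesis
    unfolding distmul_def sum_proj_G_mult[of "\<lambda>a. real (dG (proj_G p) a)"]
      sum_proj_H_mult[of "\<lambda>b. real (dH (proj_H p) b)"] .
qed

lemma affine_level_coalescence_add:
  assumes "affine_level VG (distance_matrix VG EG) \<alpha>" "affine_level VH (distance_matrix VH EH) \<beta>"
  shows "affine_level VC (distance_matrix VC EC) (\<alpha> + \<beta>)"
proof -
  obtain x where x: "sum x VG = 1" "\<forall>a\<in>VG. distmul VG EG x a = \<alpha>"
    using assms(1) by (auto simp: affine_level_distance_matrix_iff)
  obtain y where y: "sum y VH = 1" "\<forall>b\<in>VH. distmul VH EH y b = \<beta>"
    using assms(2) by (auto simp: affine_level_distance_matrix_iff)
  define z where "z = case_sum (\<lambda>a. x a + (if a = u0 then y v0 - 1 else 0)) y"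
  have "y v0 + (\<Sum>b\<in>VH-{v0}. y b) = 1"
    using sum.remove[OF finite_VH v0_in, of y] y(1) by simp
  then have push_G_z: "push_G z = x"
    by (auto simp: push_G_def z_def)
  have "(\<Sum>a\<in>VG. z (Inl a)) = (\<Sum>a\<in>VG. x a) + (\<Sum>a\<in>VG. if a = u0 then y v0 - 1 else 0)"
    by (simp add: z_def sum.distrib)
  also have "\<dots> = y v0"
    using x(1) finite_VG u0_in by (simp add: sum.delta')
  finally have push_H_z: "push_H z = y"
    by (auto simp: push_H_def z_def)
  have "sum z VC = 1"
    using sum_push_G[of z] push_G_z x(1) by simp
  moreover have "\<forall>p\<in>VC. distmul VC EC z p = \<alpha> + \<beta>"
    using distmul_coalescence push_G_z push_H_z x(2) y(2) proj_G_in proj_H_in by simp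
  ultimately show ?thesis
    by (auto simp: affine_level_distance_matrix_iff)
qed

lemma affine_level_coalescence_factors:
  assumes "affine_level VC (distance_matrix VC EC) \<gamma>"
  shows "\<exists>\<alpha>. affine_level VG (distance_matrix VG EG) \<alpha>"
    and "\<exists>\<beta>. affine_level VH (distance_matrix VH EH) \<beta>"
proof -
  obtain z where z: "sum z VC = 1" "\<forall>p\<in>VC. distmul VC EC z p = \<gamma>"
    using assms by (auto simp: affine_level_distance_matrix_iff)
  have level: "distmul VG EG (push_G z) (proj_G p) = \<gamma> - distmul VH EH (push_H z) (proj_H p)"
    if "p \<in> VC" for p
    using distmul_coalescence[OF that, of z] z(2) that by simp
  have "distmul VG EG (push_G z) a = \<gamma> - distmul VH EH (push_H z) v0" if "a \<in> VG" for a
    using level[of "Inl a"] that by (simp add: coal_V_def proj_G_def proj_H_def)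
  then have "affine_level VG (distance_matrix VG EG) (\<gamma> - distmul VH EH (push_H z) v0)"
    unfolding affine_level_distance_matrix_iff using z(1) sum_push_G[of z]
    by (intro exI[of _ "push_G z"]) simp
  then show "\<exists>\<alpha>. affine_level VG (distance_matrix VG EG) \<alpha>" ..
  have "distmul VH EH (push_H z) b = \<gamma> - distmul VG EG (push_G z) u0" if "b \<in> VH" for b
  proof (cases "b = v0")
    case True
    then show ?thesis
      using level[of "Inl u0"] u0_in by (simp add: coal_V_def proj_G_def proj_H_def)
  next
    case False
    then show ?thesis
      using level[of "Inr b"] that by (simp add: coal_V_def proj_G_def proj_H_def)
  qed
  then have "affine_level VH (distance_matrix VH EH) (\<gamma> - distmul VG EG (push_G z) u0)"
    unfolding affine_level_distance_matrix_iff using z(1) sum_push_H[of z]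
    by (intro exI[of _ "push_H z"]) simp
  then show "\<exists>\<beta>. affine_level VH (distance_matrix VH EH) \<beta>" ..
qed

end

theorem theorem3p5:
  fixes VG :: "'a set" and EG :: "'a \<Rightarrow> 'a \<Rightarrow> bool"
    and VH :: "'b set" and EH :: "'b \<Rightarrow> 'b \<Rightarrow> bool"
    and u0 :: 'a and v0 :: 'b
  assumes "connected_graph VG EG" and "connected_graph VH EH"
    and "u0 \<in> VG" and "v0 \<in> VH"
  shows "(curv_index VG EG < \<infinity> \<and> curv_index VH EH < \<infinity> \<longrightarrow>
            curv_index (coal_V VG VH v0) (coal_E EG EH u0 v0)
              = curv_index VG EG + curv_index VH EH)
       \<and> (curv_index VG EG = \<infinity> \<or> curv_index VH EH = \<infinity> \<longrightarrow>
            curv_index (coal_V VG VH v0) (coal_E EG EH u0 v0) = \<infinity>)"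
proof -
  interpret coalescence VG EG VH EH u0 v0
    using assms by unfold_locales
  show ?thesis
  proof (intro conjI impI)
    assume "curv_index VG EG < \<infinity> \<and> curv_index VH EH < \<infinity>"
    then obtain \<alpha> \<beta> where \<alpha>: "affine_level VG (distance_matrix VG EG) \<alpha>"
      and \<beta>: "affine_level VH (distance_matrix VH EH) \<beta>"
      using curv_index_eq_infinity[OF connected_G] curv_index_eq_infinity[OF connected_H] by force
    show "curv_index VC EC = curv_index VG EG + curv_index VH EH"
      using curv_index_eq_ereal[OF connected_coalescence affine_level_coalescence_add[OF \<alpha> \<beta>]]
        curv_index_eq_ereal[OF connected_G \<alpha>] curv_index_eq_ereal[OF connected_H \<beta>] by simp
  next
    assume "curv_index VG EG = \<infinity> \<or> curv_index VH EH = \<infinity>"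
    then have "(\<nexists>\<alpha>. affine_level VG (distance_matrix VG EG) \<alpha>) \<or>
        (\<nexists>\<beta>. affine_level VH (distance_matrix VH EH) \<beta>)"
      using curv_index_eq_ereal[OF connected_G] curv_index_eq_ereal[OF connected_H] by force
    then show "curv_index VC EC = \<infinity>"
      using affine_level_coalescence_factors curv_index_eq_infinity[OF connected_coalescence] by blast
  qed
qed

end
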